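(* Let $\mathcal{A}$ be a linear hyperplane arrangement in $\mathbb{R}^n$ and let $L_{n-d},L'_{n-d}$ be linear subspaces of $\mathbb{R}^n$ of codimension $d$. If $L_{n-d}$ is in general position with respect to $\mathcal{A}$, then $$\{R\in\mathcal{R}(\mathcal{A}):\bar R\cap L_{n-d}\neq\{0\}\}=\{R\in\mathcal{R}(\mathcal{A}):R\cap L_{n-d}\neq\varnothing\},$$ $$\#\{R\in\mathcal{R}(\mathcal{A}):\bar R\cap L'_{n-d}\neq\{0\}\}\ge\#\{R\in\mathcal{R}(\mathcal{A}):\bar R\cap L_{n-d}\neq\{0\}\},$$ $$\#\{R\in\mathcal{R}(\mathcal{A}):R\cap L'_{n-d}\neq\varnothing\}\le\#\{R\in\mathcal{R}(\mathcal{A}):R\cap L_{n-d}\neq\varnothing\}.$$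
   Context: A linear hyperplane arrangement $\mathcal{A}$ in $\mathbb{R}^n$ is a finite set of distinct hyperplanes through the origin; $\mathcal{R}(\mathcal{A})$ is the set of connected components of $\mathbb{R}^n\setminus\bigcup_{H\in\mathcal{A}}H$; $\bar R$ is the closure of $R$. For $\mathcal{B}\subset\mathcal{A}$, $\mathrm{rank}(\mathcal{B})=n-\dim\bigcap_{H\in\mathcal{B}}H$. A linear subspace $L_{n-d}$ of codimension $d\le n-1$ is in general position w.r.t. $\mathcal{A}$ if for every nonempty $\mathcal{B}\subset\mathcal{A}$, $\dim\bigcap_{H\in\mathcal{B}}(H\cap L_{n-d})$ equals $n-d-\mathrm{rank}(\mathcal{B})$ if $\mathrm{rank}(\mathcal{B})\le n-d$ and $0$ otherwise. *)

theory Defs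
  imports "HOL-Analysis.Analysis"
begin

definition lin_hyperplane :: "'a::euclidean_space set \<Rightarrow> bool" where
  "lin_hyperplane H \<longleftrightarrow> (\<exists>a. a \<noteq> 0 \<and> H = {x. a \<bullet> x = 0})"

definition lin_arrangement :: "'a::euclidean_space set set \<Rightarrow> bool" where
  "lin_arrangement A \<longleftrightarrow> finite A \<and> (\<forall>H\<in>A. lin_hyperplane H)"

definition regions :: "'a::euclidean_space set set \<Rightarrow> 'a set set" where
  "regions A = components (UNIV - \<Union>A)"

definition arr_rank :: "'a::euclidean_space set set \<Rightarrow> nat" where
  "arr_rank B = DIM('a) - dim (\<Inter>B)"

definition general_position ::
    "'a::euclidean_space set set \<Rightarrow> nat \<Rightarrow> 'a set \<Rightarrow> bool" where
  "general_position A d L \<longleftrightarrow>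
     (\<forall>B. B \<noteq> {} \<and> B \<subseteq> A \<longrightarrow>
        dim (\<Inter>H\<in>B. H \<inter> L) =
          (if arr_rank B \<le> DIM('a) - d then DIM('a) - d - arr_rank B else 0))"

end

theory Submission
  imports Defs
begin

text \<open>Describe each region by its sign vector, the set of hyperplanes on whose positive side it
  lies. Deleting a hyperplane \<open>H\<close>, the regions meeting a subspace \<open>M\<close> are at most the regions of
  the smaller arrangement meeting \<open>M\<close> plus those meeting \<open>M \<inter> H\<close>, with equality when no hyperplane
  contains \<open>M\<close>; for closed regions meeting \<open>M - {0}\<close> the same sum is a lower bound instead.
  A subspace in general position stays in general position inside \<open>H\<close> and loses exactly one
  dimension there, while an arbitrary subspace of the same dimension loses at most one, so
  induction on the number of hyperplanes compares the two counts. Finally, if a closed region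
  meets a generic \<open>L\<close> in a point \<open>x \<noteq> 0\<close>, the hyperplanes through \<open>x\<close> together with \<open>L\<close> span
  the whole space, so \<open>x\<close> can be pushed inside \<open>L\<close> into the open region.\<close>

section \<open>Sign vectors\<close>

definition hplane :: "('b \<Rightarrow> 'a::euclidean_space) \<Rightarrow> 'b \<Rightarrow> 'a set" where
  "hplane n H = {x. n H \<bullet> x = 0}"

definition off_hplanes :: "('b \<Rightarrow> 'a::euclidean_space) \<Rightarrow> 'b set \<Rightarrow> 'a \<Rightarrow> bool" where
  "off_hplanes n A x \<longleftrightarrow> (\<forall>H\<in>A. n H \<bullet> x \<noteq> 0)"

lemma subspace_hplane: "subspace (hplane n H)"
  unfolding hplane_def by (rule subspace_hyperplane)

definition sign_vector :: "('b \<Rightarrow> 'a::euclidean_space) \<Rightarrow> 'b set \<Rightarrow> 'a \<Rightarrow> 'b set" where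
  "sign_vector n A x = {H\<in>A. n H \<bullet> x > 0}"

lemma sgn_inner_perturb:
  fixes x z :: "'a::euclidean_space"
  assumes "finite A"
  shows "\<exists>t>0. \<forall>H\<in>A. n H \<bullet> x \<noteq> 0 \<longrightarrow> sgn (n H \<bullet> (x + t *\<^sub>R z)) = sgn (n H \<bullet> x)"
proof -
  have "\<forall>\<^sub>F t in at_right 0. \<forall>H\<in>A. n H \<bullet> x \<noteq> 0 \<longrightarrow> sgn (n H \<bullet> (x + t *\<^sub>R z)) = sgn (n H \<bullet> x)"
  proof (intro eventually_ball_finite[OF assms] ballI)
    fix H
    have lim: "((\<lambda>t. n H \<bullet> (x + t *\<^sub>R z)) \<longlongrightarrow> n H \<bullet> x) (at_right 0)"
      by (auto intro!: tendsto_eq_intros)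
    consider "n H \<bullet> x > 0" | "n H \<bullet> x < 0" | "n H \<bullet> x = 0" by linarith
    then show "\<forall>\<^sub>F t in at_right 0. n H \<bullet> x \<noteq> 0 \<longrightarrow> sgn (n H \<bullet> (x + t *\<^sub>R z)) = sgn (n H \<bullet> x)"
    proof cases
      case 1
      with order_tendstoD(1)[OF lim 1] show ?thesis by eventually_elim (use 1 in auto)
    next
      case 2
      with order_tendstoD(2)[OF lim 2] show ?thesis by eventually_elim (use 2 in auto)
    qed simp
  qed
  then obtain b where "b > 0"
    and b: "\<And>t. 0 < t \<Longrightarrow> t < b \<Longrightarrow> \<forall>H\<in>A. n H \<bullet> x \<noteq> 0 \<longrightarrow> sgn (n H \<bullet> (x + t *\<^sub>R z)) = sgn (n H \<bullet> x)"
    unfolding eventually_at_right_field by auto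
  then show ?thesis using b[of "b / 2"] by (intro exI[of _ "b / 2"]) auto
qed

lemma sign_vector_perturb:
  assumes "finite A" "off_hplanes n A z"
  shows "\<exists>t>0. off_hplanes n A (x + t *\<^sub>R z) \<and>
     sign_vector n A (x + t *\<^sub>R z) = {H\<in>A. n H \<bullet> x > 0 \<or> (n H \<bullet> x = 0 \<and> n H \<bullet> z > 0)}"
proof -
  obtain t where "t > 0"
    and t: "\<forall>H\<in>A. n H \<bullet> x \<noteq> 0 \<longrightarrow> sgn (n H \<bullet> (x + t *\<^sub>R z)) = sgn (n H \<bullet> x)"
    using sgn_inner_perturb[OF assms(1)] by blast
  have "n H \<bullet> (x + t *\<^sub>R z) \<noteq> 0 \<and>
      (n H \<bullet> (x + t *\<^sub>R z) > 0 \<longleftrightarrow> n H \<bullet> x > 0 \<or> (n H \<bullet> x = 0 \<and> n H \<bullet> z > 0))"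
    if "H \<in> A" for H
  proof (cases "n H \<bullet> x = 0")
    case True
    moreover have "n H \<bullet> z \<noteq> 0" using assms(2) that unfolding off_hplanes_def by auto
    ultimately show ?thesis using \<open>t > 0\<close> by (auto simp: inner_add_right zero_less_mult_iff)
  next
    case False
    then have "sgn (n H \<bullet> (x + t *\<^sub>R z)) = sgn (n H \<bullet> x)" using t that by auto
    then show ?thesis using False by (auto simp: sgn_if split: if_splits)
  qed
  then show ?thesis using \<open>t > 0\<close> unfolding off_hplanes_def sign_vector_def by (intro exI[of _ t]) auto
qed

lemma exists_off_hplanes:
  assumes "subspace V" "finite A" "\<forall>H\<in>A. \<not> V \<subseteq> hplane n H"
  shows "\<exists>w\<in>V. off_hplanes n A (w::'a::euclidean_space)"
  using assms(2,3)
proof (induction A rule: finite_induct)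
  case empty
  then show ?case using subspace_0[OF assms(1)] unfolding off_hplanes_def by auto
next
  case (insert H A)
  then obtain w where w: "w \<in> V" "off_hplanes n A w" by auto
  obtain u where u: "u \<in> V" "n H \<bullet> u \<noteq> 0" using insert.prems unfolding hplane_def by auto
  show ?case
  proof (cases "n H \<bullet> w = 0")
    case False
    then show ?thesis using w unfolding off_hplanes_def by auto
  next
    case True
    obtain t where "t > 0"
      and t: "\<forall>H\<in>A. n H \<bullet> w \<noteq> 0 \<longrightarrow> sgn (n H \<bullet> (w + t *\<^sub>R u)) = sgn (n H \<bullet> w)"
      using sgn_inner_perturb[OF insert.hyps(1)] by blast
    have "w + t *\<^sub>R u \<in> V" using w u assms(1) by (simp add: subspace_add subspace_scale)
    moreover have "off_hplanes n (insert H A) (w + t *\<^sub>R u)"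
      using True u \<open>t > 0\<close> t w(2) unfolding off_hplanes_def by (auto simp: inner_add_right sgn_0_0)
    ultimately show ?thesis by blast
  qed
qed

definition cell :: "('b \<Rightarrow> 'a::euclidean_space) \<Rightarrow> 'b set \<Rightarrow> 'b set \<Rightarrow> 'a set" where
  "cell n A P = {x. off_hplanes n A x \<and> sign_vector n A x = P}"

definition closed_cell :: "('b \<Rightarrow> 'a::euclidean_space) \<Rightarrow> 'b set \<Rightarrow> 'b set \<Rightarrow> 'a set" where
  "closed_cell n A P = {x. \<forall>H\<in>A. (H \<in> P \<longrightarrow> n H \<bullet> x \<ge> 0) \<and> (H \<notin> P \<longrightarrow> n H \<bullet> x \<le> 0)}"

text \<open>The regions of \<open>A\<close> are the nonempty cells; \<open>meeting_signs n A M\<close> encodes the regions meeting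
  \<open>M\<close>, and \<open>closure_meeting_signs n A V M\<close> the regions of \<open>A\<close> restricted to \<open>V\<close> whose closure
  meets \<open>M - {0}\<close>.\<close>
definition meeting_signs :: "('b \<Rightarrow> 'a::euclidean_space) \<Rightarrow> 'b set \<Rightarrow> 'a set \<Rightarrow> 'b set set" where
  "meeting_signs n A M = {sign_vector n A x | x. x \<in> M \<and> off_hplanes n A x}"

definition closure_meeting_signs ::
    "('b \<Rightarrow> 'a::euclidean_space) \<Rightarrow> 'b set \<Rightarrow> 'a set \<Rightarrow> 'a set \<Rightarrow> 'b set set" where
  "closure_meeting_signs n A V M = {P \<in> meeting_signs n A V. \<exists>x\<in>M. x \<noteq> 0 \<and> x \<in> closed_cell n A P}"

lemma sign_vector_subset: "sign_vector n A x \<subseteq> A"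
  by (auto simp: sign_vector_def)

lemma mem_closed_cell_sign_vector: "x \<in> closed_cell n A (sign_vector n A x)"
  by (auto simp: closed_cell_def sign_vector_def)

lemma meeting_signs_iff: "P \<in> meeting_signs n A M \<longleftrightarrow> (\<exists>x\<in>M. off_hplanes n A x \<and> sign_vector n A x = P)"
  by (auto simp: meeting_signs_def)

lemma sign_vector_in_meeting_signs:
  "x \<in> M \<Longrightarrow> off_hplanes n A x \<Longrightarrow> sign_vector n A x \<in> meeting_signs n A M"
  by (auto simp: meeting_signs_def)

lemma closure_meeting_signs_iff:
  "P \<in> closure_meeting_signs n A V M \<longleftrightarrow>
    (\<exists>y\<in>V. off_hplanes n A y \<and> sign_vector n A y = P) \<and> (\<exists>x\<in>M. x \<noteq> 0 \<and> x \<in> closed_cell n A P)"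
  by (auto simp: closure_meeting_signs_def meeting_signs_iff)

lemma sign_vector_in_closure_meeting_signs:
  "y \<in> V \<Longrightarrow> off_hplanes n A y \<Longrightarrow> x \<in> M \<Longrightarrow> x \<noteq> 0 \<Longrightarrow> x \<in> closed_cell n A (sign_vector n A y)
    \<Longrightarrow> sign_vector n A y \<in> closure_meeting_signs n A V M"
  unfolding closure_meeting_signs_def by (auto intro: sign_vector_in_meeting_signs)

lemma meeting_signs_subset_Pow: "meeting_signs n A M \<subseteq> Pow A"
  by (auto simp: meeting_signs_def sign_vector_def)

lemma finite_meeting_signs: "finite A \<Longrightarrow> finite (meeting_signs n A M)"
  using meeting_signs_subset_Pow by (rule finite_subset) simp

lemma card_meeting_signs_le_pow:
  assumes "finite A"
  shows "card (meeting_signs n A M) \<le> 2 ^ card A"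
proof -
  have "card (meeting_signs n A M) \<le> card (Pow A)"
    using assms by (intro card_mono meeting_signs_subset_Pow) simp
  then show ?thesis using assms by (simp add: card_Pow)
qed

lemma finite_closure_meeting_signs: "finite A \<Longrightarrow> finite (closure_meeting_signs n A V M)"
  unfolding closure_meeting_signs_def by (simp add: finite_meeting_signs)

lemma meeting_signs_mono: "M \<subseteq> M' \<Longrightarrow> meeting_signs n A M \<subseteq> meeting_signs n A M'"
  by (auto simp: meeting_signs_def)

lemma meeting_signs_empty: "0 \<in> M \<Longrightarrow> meeting_signs n {} M = {{}}"
  by (auto simp: meeting_signs_def off_hplanes_def sign_vector_def)

lemma meeting_signs_eq_empty: "H \<in> A \<Longrightarrow> M \<subseteq> hplane n H \<Longrightarrow> meeting_signs n A M = {}"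
  by (auto simp: meeting_signs_def off_hplanes_def hplane_def)

lemma sign_vector_insert_Diff: "H \<notin> A \<Longrightarrow> sign_vector n (insert H A) x - {H} = sign_vector n A x"
  by (auto simp: sign_vector_def)

lemma mem_cell_iff_signs:
  assumes "P \<subseteq> A"
  shows "x \<in> cell n A P \<longleftrightarrow> (\<forall>H\<in>P. n H \<bullet> x > 0) \<and> (\<forall>H\<in>A - P. n H \<bullet> x < 0)"
proof
  assume "x \<in> cell n A P"
  then have "n H \<bullet> x \<noteq> 0" "H \<in> P \<longleftrightarrow> n H \<bullet> x > 0" if "H \<in> A" for H
    using that by (auto simp: cell_def off_hplanes_def sign_vector_def)
  then show "(\<forall>H\<in>P. n H \<bullet> x > 0) \<and> (\<forall>H\<in>A - P. n H \<bullet> x < 0)"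
    using assms by (metis Diff_iff linorder_neqE_linordered_idom subsetD)
next
  assume signs: "(\<forall>H\<in>P. n H \<bullet> x > 0) \<and> (\<forall>H\<in>A - P. n H \<bullet> x < 0)"
  then have "off_hplanes n A x" unfolding off_hplanes_def by (metis Diff_iff less_irrefl)
  moreover have "sign_vector n A x = P"
    using assms signs unfolding sign_vector_def by force
  ultimately show "x \<in> cell n A P" by (simp add: cell_def)
qed

lemma convex_cell: "convex (cell n A P)"
proof (cases "P \<subseteq> A")
  case True
  then have "cell n A P = (\<Inter>H\<in>P. {x. n H \<bullet> x > 0}) \<inter> (\<Inter>H\<in>A - P. {x. n H \<bullet> x < 0})"
    by (auto simp: mem_cell_iff_signs)
  then show ?thesis by (auto intro!: convex_INT convex_Int simp: convex_halfspace_gt convex_halfspace_lt)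
next
  case False
  then have "cell n A P = {}" by (auto simp: cell_def sign_vector_def)
  then show ?thesis by simp
qed

lemma closed_closed_cell: "closed (closed_cell n A P)"
proof -
  have "closed_cell n A P = (\<Inter>H\<in>A \<inter> P. {x. n H \<bullet> x \<ge> 0}) \<inter> (\<Inter>H\<in>A - P. {x. n H \<bullet> x \<le> 0})"
    by (auto simp: closed_cell_def)
  then show ?thesis by (auto intro!: closed_INT closed_Int simp: closed_halfspace_ge closed_halfspace_le)
qed

section \<open>Deletion and restriction\<close>

text \<open>Deleting \<open>H\<close> maps a family of sign vectors onto the union of the images of its members
  on the negative and on the positive side of \<open>H\<close>; the images seen from both sides are
  counted twice.\<close>
lemma card_delete_split:
  assumes "finite F"
  shows "card F = card ((\<lambda>P. P - {H}) ` {P\<in>F. H \<notin> P} \<union> (\<lambda>P. P - {H}) ` {P\<in>F. H \<in> P})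
     + card ((\<lambda>P. P - {H}) ` {P\<in>F. H \<notin> P} \<inter> (\<lambda>P. P - {H}) ` {P\<in>F. H \<in> P})"
proof -
  have "card F = card {P\<in>F. H \<notin> P} + card {P\<in>F. H \<in> P}"
    using assms by (subst card_Un_disjoint[symmetric]) (auto intro: arg_cong[where f = card])
  also have "card {P\<in>F. H \<notin> P} = card ((\<lambda>P. P - {H}) ` {P\<in>F. H \<notin> P})"
    by (rule card_image[symmetric]) (auto simp: inj_on_def)
  also have "card {P\<in>F. H \<in> P} = card ((\<lambda>P. P - {H}) ` {P\<in>F. H \<in> P})"
    by (rule card_image[symmetric]) (auto intro!: inj_onI dest: insert_Diff)
  finally show ?thesis using assms by (intro trans[OF _ card_Un_Int]) auto
qed

lemma card_delete_le:
  assumes "finite F" "finite X" "finite Y"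
    and "(\<lambda>P. P - {H}) ` {P\<in>F. H \<notin> P} \<union> (\<lambda>P. P - {H}) ` {P\<in>F. H \<in> P} \<subseteq> X"
    and "(\<lambda>P. P - {H}) ` {P\<in>F. H \<notin> P} \<inter> (\<lambda>P. P - {H}) ` {P\<in>F. H \<in> P} \<subseteq> Y"
  shows "card F \<le> card X + card Y"
  using card_delete_split[OF assms(1), of H] card_mono[OF assms(2,4)] card_mono[OF assms(3,5)]
  by linarith

lemma card_delete_ge:
  assumes "finite F"
    and "X \<subseteq> (\<lambda>P. P - {H}) ` {P\<in>F. H \<notin> P} \<union> (\<lambda>P. P - {H}) ` {P\<in>F. H \<in> P}"
    and "Y \<subseteq> (\<lambda>P. P - {H}) ` {P\<in>F. H \<notin> P} \<inter> (\<lambda>P. P - {H}) ` {P\<in>F. H \<in> P}"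
  shows "card X + card Y \<le> card F"
proof -
  have "finite ((\<lambda>P. P - {H}) ` {P\<in>F. H \<notin> P} \<union> (\<lambda>P. P - {H}) ` {P\<in>F. H \<in> P})"
    using assms(1) by simp
  moreover from this have "finite ((\<lambda>P. P - {H}) ` {P\<in>F. H \<notin> P} \<inter> (\<lambda>P. P - {H}) ` {P\<in>F. H \<in> P})"
    by (rule finite_subset[rotated]) blast
  ultimately show ?thesis using card_delete_split[OF assms(1), of H] card_mono[OF _ assms(2)]
      card_mono[OF _ assms(3)] by linarith
qed

text \<open>A sign vector seen from both sides of \<open>H\<close> is realised by two points of \<open>M\<close> in one cell of
  \<open>A\<close>; the segment between them crosses \<open>H\<close> inside that cell.\<close>
lemma card_meeting_signs_insert_le:
  assumes "finite A" "H \<notin> A" "convex M"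
  shows "card (meeting_signs n (insert H A) M)
    \<le> card (meeting_signs n A M) + card (meeting_signs n A (M \<inter> hplane n H))"
proof -
  let ?F = "meeting_signs n (insert H A) M"
  let ?F1 = "(\<lambda>P. P - {H}) ` {P\<in>?F. H \<notin> P}" and ?F2 = "(\<lambda>P. P - {H}) ` {P\<in>?F. H \<in> P}"
  have restrict: "\<exists>x\<in>M. off_hplanes n (insert H A) x \<and> x \<in> cell n A (P - {H}) \<and>
      (H \<in> P \<longleftrightarrow> n H \<bullet> x > 0)" if P: "P \<in> ?F" for P
  proof -
    obtain x where "x \<in> M" "off_hplanes n (insert H A) x" "sign_vector n (insert H A) x = P"
      using P by (auto simp: meeting_signs_iff)
    then show ?thesis using sign_vector_insert_Diff[OF assms(2)]
      by (auto simp: cell_def sign_vector_def off_hplanes_def)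
  qed
  have "?F1 \<union> ?F2 \<subseteq> meeting_signs n A M"
    using restrict by (fastforce simp: meeting_signs_iff cell_def)
  moreover have "?F1 \<inter> ?F2 \<subseteq> meeting_signs n A (M \<inter> hplane n H)"
  proof
    fix Q assume "Q \<in> ?F1 \<inter> ?F2"
    then obtain P1 P2 where "P1 \<in> ?F" "H \<notin> P1" "Q = P1 - {H}" "P2 \<in> ?F" "H \<in> P2" "Q = P2 - {H}"
      by blast
    then obtain x1 x2 where x1: "x1 \<in> M" "x1 \<in> cell n A Q" "n H \<bullet> x1 < 0"
      and x2: "x2 \<in> M" "x2 \<in> cell n A Q" "n H \<bullet> x2 > 0"
      using restrict by (metis insertI1 linorder_neqE_linordered_idom off_hplanes_def)
    define s where "s = (n H \<bullet> x1) / (n H \<bullet> x1 - n H \<bullet> x2)"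
    have s: "0 \<le> s" "s \<le> 1" using x1(3) x2(3) unfolding s_def by (simp_all add: divide_simps)
    define z where "z = (1 - s) *\<^sub>R x1 + s *\<^sub>R x2"
    have "n H \<bullet> z = (1 - s) * (n H \<bullet> x1) + s * (n H \<bullet> x2)"
      unfolding z_def by (simp add: inner_add_right)
    also have "\<dots> = 0" using x1(3) x2(3) unfolding s_def by (simp add: field_simps)
    finally have "n H \<bullet> z = 0" .
    moreover have "z \<in> M" unfolding z_def using x1(1) x2(1) s assms(3) by (intro convexD) auto
    moreover have "z \<in> cell n A Q" unfolding z_def using x1(2) x2(2) s convex_cell by (intro convexD) auto
    ultimately show "Q \<in> meeting_signs n A (M \<inter> hplane n H)"
      by (auto simp: meeting_signs_iff cell_def hplane_def)
  qed
  ultimately show ?thesis by (intro card_delete_le finite_meeting_signs finite.insertI assms(1))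
qed

lemma sign_vector_perturb_insert:
  assumes "finite A" "H \<notin> A" "off_hplanes n A y" "off_hplanes n (insert H A) w"
  shows "\<exists>t>0. off_hplanes n (insert H A) (y + t *\<^sub>R w) \<and>
    sign_vector n (insert H A) (y + t *\<^sub>R w) - {H} = sign_vector n A y \<and>
    (n H \<bullet> y = 0 \<longrightarrow> (H \<in> sign_vector n (insert H A) (y + t *\<^sub>R w) \<longleftrightarrow> n H \<bullet> w > 0))"
proof -
  obtain t where "t > 0" "off_hplanes n (insert H A) (y + t *\<^sub>R w)"
    and signs: "sign_vector n (insert H A) (y + t *\<^sub>R w) =
      {H'\<in>insert H A. n H' \<bullet> y > 0 \<or> (n H' \<bullet> y = 0 \<and> n H' \<bullet> w > 0)}"
    using sign_vector_perturb[of "insert H A" n w y] assms by auto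
  moreover have "sign_vector n (insert H A) (y + t *\<^sub>R w) - {H} = sign_vector n A y"
    using signs assms(2,3) unfolding sign_vector_def off_hplanes_def by auto
  ultimately show ?thesis by (intro exI[of _ t]) auto
qed

text \<open>Pushing a point of \<open>M\<close> slightly along a direction \<open>w \<in> M\<close> off all hyperplanes realises
  its sign vector in \<open>insert H A\<close>; for a point of \<open>M \<inter> H\<close> the directions \<open>w\<close> and \<open>-w\<close> realise
  both sides of \<open>H\<close>.\<close>
lemma card_meeting_signs_insert_ge:
  assumes "finite A" "H \<notin> A" "subspace M" "\<forall>H'\<in>insert H A. \<not> M \<subseteq> hplane n H'"
  shows "card (meeting_signs n A M) + card (meeting_signs n A (M \<inter> hplane n H))
    \<le> card (meeting_signs n (insert H A) M)"
proof -
  let ?F = "meeting_signs n (insert H A) M"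
  let ?F1 = "(\<lambda>P. P - {H}) ` {P\<in>?F. H \<notin> P}" and ?F2 = "(\<lambda>P. P - {H}) ` {P\<in>?F. H \<in> P}"
  have F1: "P - {H} \<in> ?F1" if "P \<in> ?F" "H \<notin> P" for P using that by blast
  have F2: "P - {H} \<in> ?F2" if "P \<in> ?F" "H \<in> P" for P using that by blast
  obtain w where w: "w \<in> M" "off_hplanes n (insert H A) w"
    using exists_off_hplanes[OF assms(3) _ assms(4)] assms(1) by auto
  have lift: "\<exists>P\<in>?F. P - {H} = sign_vector n A y \<and> (n H \<bullet> y = 0 \<longrightarrow> (H \<in> P \<longleftrightarrow> n H \<bullet> v > 0))"
    if y: "y \<in> M" "off_hplanes n A y" and v: "v \<in> {w, -w}" for y v
  proof -
    have "v \<in> M" "off_hplanes n (insert H A) v"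
      using w v assms(3) by (auto simp: subspace_neg off_hplanes_def)
    then obtain t where t: "off_hplanes n (insert H A) (y + t *\<^sub>R v)"
      "sign_vector n (insert H A) (y + t *\<^sub>R v) - {H} = sign_vector n A y"
      "n H \<bullet> y = 0 \<longrightarrow> (H \<in> sign_vector n (insert H A) (y + t *\<^sub>R v) \<longleftrightarrow> n H \<bullet> v > 0)"
      using sign_vector_perturb_insert[OF assms(1,2) y(2)] by blast
    moreover have "y + t *\<^sub>R v \<in> M" using y(1) \<open>v \<in> M\<close> assms(3) by (simp add: subspace_add subspace_scale)
    ultimately show ?thesis by (blast intro: sign_vector_in_meeting_signs)
  qed
  have "meeting_signs n A M \<subseteq> ?F1 \<union> ?F2"
  proof
    fix Q assume "Q \<in> meeting_signs n A M"
    then obtain y where "y \<in> M" "off_hplanes n A y" "Q = sign_vector n A y"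
      unfolding meeting_signs_iff by blast
    then obtain P where "P \<in> ?F" "P - {H} = Q" using lift[of y w] by blast
    then show "Q \<in> ?F1 \<union> ?F2" using F1 F2 by (cases "H \<in> P") auto
  qed
  moreover have "meeting_signs n A (M \<inter> hplane n H) \<subseteq> ?F1 \<inter> ?F2"
  proof
    fix Q assume "Q \<in> meeting_signs n A (M \<inter> hplane n H)"
    then obtain y where y: "y \<in> M" "n H \<bullet> y = 0" "off_hplanes n A y" "Q = sign_vector n A y"
      unfolding meeting_signs_iff hplane_def by blast
    obtain P1 P2 where P1: "P1 \<in> ?F" "P1 - {H} = Q" "H \<in> P1 \<longleftrightarrow> n H \<bullet> w > 0"
      and P2: "P2 \<in> ?F" "P2 - {H} = Q" "H \<in> P2 \<longleftrightarrow> n H \<bullet> w < 0"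
      using lift[OF y(1,3), of w] lift[OF y(1,3), of "-w"] y(2,4) by auto
    have "n H \<bullet> w \<noteq> 0" using w(2) by (simp add: off_hplanes_def)
    then show "Q \<in> ?F1 \<inter> ?F2"
      using F1[OF P1(1)] F2[OF P1(1)] F1[OF P2(1)] F2[OF P2(1)] P1(2,3) P2(2,3) by force
  qed
  ultimately show ?thesis by (intro card_delete_ge finite_meeting_signs finite.insertI assms(1))
qed

lemma closure_sign_vector_perturb_insert:
  assumes "finite A" "H \<notin> A" "subspace V" "M \<subseteq> V"
    and y: "y \<in> V" "off_hplanes n A y"
    and x: "x \<in> M" "x \<noteq> 0" "x \<in> closed_cell n A (sign_vector n A y)"
    and w: "w \<in> V" "off_hplanes n (insert H A) w"
  shows "\<exists>P\<in>closure_meeting_signs n (insert H A) V M. P - {H} = sign_vector n A y \<and>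
     (n H \<bullet> y = 0 \<longrightarrow> n H \<bullet> x = 0 \<longrightarrow> (H \<in> P \<longleftrightarrow> n H \<bullet> w > 0))"
proof -
  obtain t where t: "off_hplanes n (insert H A) (y + t *\<^sub>R w)"
      "sign_vector n (insert H A) (y + t *\<^sub>R w) - {H} = sign_vector n A y"
      "n H \<bullet> y = 0 \<longrightarrow> (H \<in> sign_vector n (insert H A) (y + t *\<^sub>R w) \<longleftrightarrow> n H \<bullet> w > 0)"
    using sign_vector_perturb_insert[OF assms(1,2) y(2) w(2)] by blast
  define z where "z = y + t *\<^sub>R w"
  have "z \<in> V" unfolding z_def using assms(3) y(1) w(1) by (simp add: subspace_add subspace_scale)
  obtain s where s: "off_hplanes n (insert H A) (x + s *\<^sub>R z)"
     "sign_vector n (insert H A) (x + s *\<^sub>R z) =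
       {H'\<in>insert H A. n H' \<bullet> x > 0 \<or> (n H' \<bullet> x = 0 \<and> n H' \<bullet> z > 0)}"
    using sign_vector_perturb[OF _ t(1)[folded z_def], of x] assms(1) by auto
  define P where "P = sign_vector n (insert H A) (x + s *\<^sub>R z)"
  have "x + s *\<^sub>R z \<in> V"
    using assms(3,4) x(1) \<open>z \<in> V\<close> by (auto simp: subspace_add subspace_scale)
  moreover have "x \<in> closed_cell n (insert H A) P" unfolding P_def s(2) closed_cell_def by auto
  ultimately have "P \<in> closure_meeting_signs n (insert H A) V M"
    using s(1) x(1,2) unfolding P_def closure_meeting_signs_iff by blast
  moreover have "P - {H} = sign_vector n A y"
  proof -
    have "H' \<in> P \<longleftrightarrow> H' \<in> sign_vector n A y" if "H' \<in> A" for H'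
    proof -
      have "H' \<in> sign_vector n A y \<longleftrightarrow> n H' \<bullet> z > 0"
        using t(2) that assms(2) unfolding z_def sign_vector_def by blast
      moreover have "H' \<in> sign_vector n A y \<Longrightarrow> n H' \<bullet> x \<ge> 0" "H' \<notin> sign_vector n A y \<Longrightarrow> n H' \<bullet> x \<le> 0"
        using x(3) that unfolding closed_cell_def by auto
      ultimately show ?thesis unfolding P_def s(2) using that by auto
    qed
    then show ?thesis using assms(2) sign_vector_subset[of n "insert H A"] sign_vector_subset[of n A]
      unfolding P_def by blast
  qed
  moreover have "H \<in> P \<longleftrightarrow> n H \<bullet> w > 0" if "n H \<bullet> y = 0" "n H \<bullet> x = 0"
    using that t(3)[folded z_def] unfolding P_def s(2) by (auto simp: sign_vector_def)
  ultimately show ?thesis by blast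
qed

lemma card_closure_meeting_signs_insert_ge:
  assumes "finite A" "H \<notin> A" "subspace V" "M \<subseteq> V" "\<forall>H'\<in>insert H A. \<not> V \<subseteq> hplane n H'"
  shows "card (closure_meeting_signs n A V M)
      + card (closure_meeting_signs n A (V \<inter> hplane n H) (M \<inter> hplane n H))
    \<le> card (closure_meeting_signs n (insert H A) V M)"
proof -
  let ?F = "closure_meeting_signs n (insert H A) V M"
  let ?F1 = "(\<lambda>P. P - {H}) ` {P\<in>?F. H \<notin> P}" and ?F2 = "(\<lambda>P. P - {H}) ` {P\<in>?F. H \<in> P}"
  have F1: "P - {H} \<in> ?F1" if "P \<in> ?F" "H \<notin> P" for P using that by blast
  have F2: "P - {H} \<in> ?F2" if "P \<in> ?F" "H \<in> P" for P using that by blast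
  obtain w where w: "w \<in> V" "off_hplanes n (insert H A) w"
    using exists_off_hplanes[OF assms(3) _ assms(5)] assms(1) by auto
  have "-w \<in> V" "off_hplanes n (insert H A) (-w)"
    using w assms(3) by (auto simp: subspace_neg off_hplanes_def)
  note lift = closure_sign_vector_perturb_insert[OF assms(1-4)]
  have "closure_meeting_signs n A V M \<subseteq> ?F1 \<union> ?F2"
  proof
    fix Q assume "Q \<in> closure_meeting_signs n A V M"
    then obtain y x where yx: "y \<in> V" "off_hplanes n A y" "Q = sign_vector n A y"
      "x \<in> M" "x \<noteq> 0" "x \<in> closed_cell n A Q"
      unfolding closure_meeting_signs_iff by blast
    then obtain P where "P \<in> ?F" "P - {H} = Q"
      using lift[OF yx(1,2,4,5) yx(6)[unfolded yx(3)] w] by blast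
    then show "Q \<in> ?F1 \<union> ?F2" using F1 F2 by (cases "H \<in> P") auto
  qed
  moreover have "closure_meeting_signs n A (V \<inter> hplane n H) (M \<inter> hplane n H) \<subseteq> ?F1 \<inter> ?F2"
  proof
    fix Q assume "Q \<in> closure_meeting_signs n A (V \<inter> hplane n H) (M \<inter> hplane n H)"
    then obtain y x where yx: "y \<in> V" "n H \<bullet> y = 0" "off_hplanes n A y" "Q = sign_vector n A y"
      "x \<in> M" "n H \<bullet> x = 0" "x \<noteq> 0" "x \<in> closed_cell n A Q"
      unfolding closure_meeting_signs_iff hplane_def by blast
    obtain P1 P2 where P1: "P1 \<in> ?F" "P1 - {H} = Q" "H \<in> P1 \<longleftrightarrow> n H \<bullet> w > 0"
      and P2: "P2 \<in> ?F" "P2 - {H} = Q" "H \<in> P2 \<longleftrightarrow> n H \<bullet> w < 0"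
      using lift[OF yx(1,3,5,7) yx(8)[unfolded yx(4)] w]
        lift[OF yx(1,3,5,7) yx(8)[unfolded yx(4)] \<open>-w \<in> V\<close> \<open>off_hplanes n (insert H A) (-w)\<close>]
        yx(2,4,6) by auto
    have "n H \<bullet> w \<noteq> 0" using w(2) by (simp add: off_hplanes_def)
    then show "Q \<in> ?F1 \<inter> ?F2"
      using F1[OF P1(1)] F2[OF P1(1)] F1[OF P2(1)] F2[OF P2(1)] P1(2,3) P2(2,3) by force
  qed
  ultimately show ?thesis by (intro card_delete_ge finite_closure_meeting_signs finite.insertI assms(1))
qed

section \<open>General position\<close>

lemma dim_Int_hplane:
  assumes "subspace V" "\<not> V \<subseteq> hplane n H"
  shows "dim (V \<inter> hplane n H) = dim V - 1" "dim V \<ge> 1"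
proof -
  have "subspace (V \<inter> hplane n H)" using assms(1) subspace_hplane by (rule subspace_inter)
  then have "int (dim (V \<inter> hplane n H)) = int (dim V) - 1"
    using aff_dim_affine_Int_hyperplane[OF subspace_imp_affine[OF assms(1)], of "n H" 0]
      assms subspace_0[OF assms(1)] by (auto simp: aff_dim_subspace hplane_def)
  then show "dim (V \<inter> hplane n H) = dim V - 1" "dim V \<ge> 1" by linarith+
qed

lemma dim_Int_hplane_ge: "subspace M \<Longrightarrow> dim M - 1 \<le> dim (M \<inter> hplane n H)"
  by (cases "M \<subseteq> hplane n H") (simp_all add: Int_absorb2 dim_Int_hplane)

text \<open>\<open>M\<close> is in general position with respect to the hyperplanes \<open>A\<close> relative to the ambient
  subspace \<open>V\<close>: every intersection of hyperplanes of \<open>A\<close> has the same codimension in \<open>M\<close> as in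
  \<open>V\<close>, where the truncated subtraction caps the codimension at \<open>dim M\<close>.\<close>
definition gen_position_in :: "('b \<Rightarrow> 'a::euclidean_space) \<Rightarrow> 'b set \<Rightarrow> 'a set \<Rightarrow> 'a set \<Rightarrow> bool" where
  "gen_position_in n A V M \<longleftrightarrow> (\<forall>B. B \<noteq> {} \<and> B \<subseteq> A \<longrightarrow>
      dim (\<Inter>(hplane n ` B) \<inter> M) = dim M - (dim V - dim (\<Inter>(hplane n ` B) \<inter> V)))"

lemma gen_position_inD:
  "gen_position_in n A V M \<Longrightarrow> B \<noteq> {} \<Longrightarrow> B \<subseteq> A \<Longrightarrow>
    dim (\<Inter>(hplane n ` B) \<inter> M) = dim M - (dim V - dim (\<Inter>(hplane n ` B) \<inter> V))"
  unfolding gen_position_in_def by blast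

lemma gen_position_in_subset: "gen_position_in n A V M \<Longrightarrow> A' \<subseteq> A \<Longrightarrow> gen_position_in n A' V M"
  unfolding gen_position_in_def by blast

lemma gen_position_in_dim_Int_hplane:
  assumes "gen_position_in n A V M" "H \<in> A" "subspace V" "\<not> V \<subseteq> hplane n H"
  shows "dim (M \<inter> hplane n H) = dim M - 1"
proof -
  have "dim (M \<inter> hplane n H) = dim M - (dim V - dim (V \<inter> hplane n H))"
    using gen_position_inD[OF assms(1), of "{H}"] assms(2) by (simp add: Int_commute)
  then show ?thesis using dim_Int_hplane[OF assms(3,4)] by simp
qed

lemma gen_position_in_not_subset_hplane:
  assumes "gen_position_in n A V M" "H \<in> A" "subspace V" "\<not> V \<subseteq> hplane n H" "dim M \<ge> 1"
  shows "\<not> M \<subseteq> hplane n H"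
  using gen_position_in_dim_Int_hplane[OF assms(1-4)] assms(5) by (auto simp: Int_absorb2)

lemma gen_position_in_Int_hplane:
  assumes "gen_position_in n (insert H A) V M" "subspace V" "\<not> V \<subseteq> hplane n H" "dim M \<ge> 1"
  shows "gen_position_in n A (V \<inter> hplane n H) (M \<inter> hplane n H)"
  unfolding gen_position_in_def
proof (intro allI impI)
  fix B assume B: "B \<noteq> {} \<and> B \<subseteq> A"
  have dM: "dim (M \<inter> hplane n H) = dim M - 1"
    using gen_position_in_dim_Int_hplane[OF assms(1) _ assms(2,3)] by simp
  have dV: "dim (V \<inter> hplane n H) = dim V - 1" "dim V \<ge> 1" using dim_Int_hplane[OF assms(2,3)] by auto
  have "dim (\<Inter>(hplane n ` insert H B) \<inter> M) = dim M - (dim V - dim (\<Inter>(hplane n ` insert H B) \<inter> V))"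
    using B by (intro gen_position_inD[OF assms(1)]) auto
  moreover have "\<Inter>(hplane n ` insert H B) \<inter> M = \<Inter>(hplane n ` B) \<inter> (M \<inter> hplane n H)"
    "\<Inter>(hplane n ` insert H B) \<inter> V = \<Inter>(hplane n ` B) \<inter> (V \<inter> hplane n H)" by auto
  moreover have "dim (\<Inter>(hplane n ` B) \<inter> (V \<inter> hplane n H)) \<le> dim (V \<inter> hplane n H)"
    by (rule dim_subset) auto
  ultimately show "dim (\<Inter>(hplane n ` B) \<inter> (M \<inter> hplane n H)) =
      dim (M \<inter> hplane n H) - (dim (V \<inter> hplane n H) - dim (\<Inter>(hplane n ` B) \<inter> (V \<inter> hplane n H)))"
    using dM dV assms(4) by simp
qed

section \<open>Counting regions met by subspaces\<close>

lemma card_meeting_signs_le_gen_position: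
  assumes "finite A" "subspace V" "subspace M" "subspace M'" "M \<subseteq> V" "M' \<subseteq> V"
    and "dim M' \<le> dim M" "gen_position_in n A V M"
  shows "card (meeting_signs n A M') \<le> card (meeting_signs n A M)"
  using assms
proof (induction A arbitrary: V M M' rule: finite_induct)
  case empty
  then show ?case by (simp add: meeting_signs_empty subspace_0)
next
  case (insert H A)
  note subspace_V = insert.prems(1) and subspace_M = insert.prems(2)
    and subspace_M' = insert.prems(3) and M'_sub = insert.prems(5)
    and dim_le = insert.prems(6) and gen = insert.prems(7)
  show ?case
  proof (cases "\<exists>H'\<in>insert H A. M' \<subseteq> hplane n H'")
    case True
    then obtain H' where "H' \<in> insert H A" "M' \<subseteq> hplane n H'" by blast
    then show ?thesis by (simp add: meeting_signs_eq_empty)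
  next
    case False
    then have "\<not> M' \<subseteq> hplane n H" by blast
    note dim_M' = dim_Int_hplane[OF subspace_M' this]
    have V_off: "\<forall>H'\<in>insert H A. \<not> V \<subseteq> hplane n H'" using False M'_sub by auto
    then have M_off: "\<forall>H'\<in>insert H A. \<not> M \<subseteq> hplane n H'"
      using gen_position_in_not_subset_hplane[OF gen _ subspace_V] dim_M'(2) dim_le by auto
    have "dim (M' \<inter> hplane n H) \<le> dim (M \<inter> hplane n H)"
      using dim_M'(1) gen_position_in_dim_Int_hplane[OF gen _ subspace_V] V_off dim_le by auto
    moreover have "gen_position_in n A (V \<inter> hplane n H) (M \<inter> hplane n H)"
      using gen_position_in_Int_hplane[OF gen subspace_V] V_off dim_M'(2) dim_le by auto
    ultimately have IH_hplane:
      "card (meeting_signs n A (M' \<inter> hplane n H)) \<le> card (meeting_signs n A (M \<inter> hplane n H))"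
      using insert.prems(4,5) by (intro insert.IH) (auto intro: subspace_inter subspace_hplane insert.prems)
    have "card (meeting_signs n (insert H A) M')
        \<le> card (meeting_signs n A M') + card (meeting_signs n A (M' \<inter> hplane n H))"
      using insert.hyps subspace_M' by (intro card_meeting_signs_insert_le subspace_imp_convex)
    also have "\<dots> \<le> card (meeting_signs n A M) + card (meeting_signs n A (M \<inter> hplane n H))"
      using insert.IH[OF insert.prems(1-6) gen_position_in_subset[OF gen subset_insertI]] IH_hplane
      by (rule add_mono)
    also have "\<dots> \<le> card (meeting_signs n (insert H A) M)"
      using insert.hyps subspace_M M_off by (intro card_meeting_signs_insert_ge)
    finally show ?thesis .
  qed
qed

lemma exists_nonzero_of_dim_ge_1:
  fixes M :: "'a::euclidean_space set"
  assumes "dim M \<ge> 1"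
  obtains v where "v \<in> M" "v \<noteq> 0"
proof -
  have "\<not> M \<subseteq> {0}" using assms dim_eq_0[of M] by linarith
  then show ?thesis using that by blast
qed

lemma card_closure_meeting_signs_ge_2:
  assumes "finite A" "H \<in> A" "subspace V" "subspace M" "M \<subseteq> V" "v \<in> M" "v \<noteq> 0"
    and "\<forall>H'\<in>A. \<not> V \<subseteq> hplane n H'"
  shows "2 \<le> card (closure_meeting_signs n A V M)"
proof -
  obtain w where w: "w \<in> V" "off_hplanes n A w" using exists_off_hplanes[OF assms(3,1,8)] by blast
  have "-w \<in> V" "off_hplanes n A (-w)" using w assms(3) by (auto simp: subspace_neg off_hplanes_def)
  have "-v \<in> M" "-v \<noteq> 0" using assms(4,6,7) by (auto simp: subspace_neg)
  have side: "\<exists>P\<in>closure_meeting_signs n A V M. H \<in> P \<longleftrightarrow> n H \<bullet> u > 0 \<or> (n H \<bullet> u = 0 \<and> n H \<bullet> z > 0)"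
    if uz: "u \<in> M" "u \<noteq> 0" "z \<in> V" "off_hplanes n A z" for u z
  proof -
    obtain t where t: "off_hplanes n A (u + t *\<^sub>R z)"
      "sign_vector n A (u + t *\<^sub>R z) = {H\<in>A. n H \<bullet> u > 0 \<or> (n H \<bullet> u = 0 \<and> n H \<bullet> z > 0)}"
      using sign_vector_perturb[OF assms(1) uz(4)] by blast
    have "u + t *\<^sub>R z \<in> V" using uz assms(3,5) by (auto simp: subspace_add subspace_scale)
    moreover have "u \<in> closed_cell n A (sign_vector n A (u + t *\<^sub>R z))"
      unfolding t(2) closed_cell_def by auto
    ultimately have "sign_vector n A (u + t *\<^sub>R z) \<in> closure_meeting_signs n A V M"
      using sign_vector_in_closure_meeting_signs t(1) uz(1,2) by metis
    moreover have "H \<in> sign_vector n A (u + t *\<^sub>R z) \<longleftrightarrow> n H \<bullet> u > 0 \<or> (n H \<bullet> u = 0 \<and> n H \<bullet> z > 0)"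
      using assms(2) unfolding t(2) by simp
    ultimately show ?thesis by (rule bexI[rotated])
  qed
  obtain P1 where P1: "P1 \<in> closure_meeting_signs n A V M"
      "H \<in> P1 \<longleftrightarrow> n H \<bullet> v > 0 \<or> (n H \<bullet> v = 0 \<and> n H \<bullet> w > 0)"
    using side[OF assms(6,7) w] by blast
  obtain P2 where P2: "P2 \<in> closure_meeting_signs n A V M"
      "H \<in> P2 \<longleftrightarrow> n H \<bullet> (-v) > 0 \<or> (n H \<bullet> (-v) = 0 \<and> n H \<bullet> (-w) > 0)"
    using side[OF \<open>-v \<in> M\<close> \<open>-v \<noteq> 0\<close> \<open>-w \<in> V\<close> \<open>off_hplanes n A (-w)\<close>] by blast
  have "n H \<bullet> w \<noteq> 0" using w(2) assms(2) by (simp add: off_hplanes_def)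
  then have "P1 \<noteq> P2" using P1(2) P2(2) by auto
  have "card {P1, P2} \<le> card (closure_meeting_signs n A V M)"
    using P1(1) P2(1) by (intro card_mono finite_closure_meeting_signs assms(1)) simp
  then show ?thesis using \<open>P1 \<noteq> P2\<close> by simp
qed

lemma card_meeting_signs_le_closure_meeting_signs:
  assumes "finite A" "subspace V" "subspace M" "subspace M'" "M \<subseteq> V" "M' \<subseteq> V"
    and "dim M \<le> dim M'" "dim M \<ge> 1" "gen_position_in n A V M"
  shows "card (meeting_signs n A M) \<le> card (closure_meeting_signs n A V M')"
  using assms
proof (induction A arbitrary: V M M' rule: finite_induct)
  case empty
  have "dim M' \<ge> 1" using empty.prems(6,7) by linarith
  then obtain v where "v \<in> M'" "v \<noteq> 0" by (rule exists_nonzero_of_dim_ge_1)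
  then have "{} \<in> closure_meeting_signs n {} V M'" using subspace_0[OF empty.prems(1)]
    by (auto simp: closure_meeting_signs_iff off_hplanes_def sign_vector_def closed_cell_def)
  then have "1 \<le> card (closure_meeting_signs n {} V M')"
    using finite_closure_meeting_signs[of "{}"] by (simp add: Suc_le_eq card_gt_0_iff) blast
  then show ?case using empty.prems(2) by (simp add: meeting_signs_empty subspace_0)
next
  case (insert H A)
  note subspace_V = insert.prems(1) and subspace_M = insert.prems(2)
    and subspace_M' = insert.prems(3) and M_sub = insert.prems(4) and M'_sub = insert.prems(5)
    and dim_le = insert.prems(6) and dim_M = insert.prems(7) and gen = insert.prems(8)
  have "dim M' \<ge> 1" using dim_le dim_M by linarith
  then obtain v where v: "v \<in> M'" "v \<noteq> 0" by (rule exists_nonzero_of_dim_ge_1)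
  show ?case
  proof (cases "\<exists>H'\<in>insert H A. V \<subseteq> hplane n H'")
    case True
    then obtain H' where "H' \<in> insert H A" "M \<subseteq> hplane n H'" using M_sub by blast
    then show ?thesis by (simp add: meeting_signs_eq_empty)
  next
    case False
    then have V_off: "\<forall>H'\<in>insert H A. \<not> V \<subseteq> hplane n H'" by blast
    have dim_M_hplane: "dim (M \<inter> hplane n H) = dim M - 1"
      using gen_position_in_dim_Int_hplane[OF gen _ subspace_V] V_off by blast
    show ?thesis
    proof (cases "A = {} \<and> dim M = 1")
      case True
      have "card (meeting_signs n (insert H A) M) \<le> 2"
        using True card_meeting_signs_le_pow[of "insert H A" n M] by simp
      also have "\<dots> \<le> card (closure_meeting_signs n (insert H A) V M')"
        using card_closure_meeting_signs_ge_2[OF _ insertI1 subspace_V subspace_M' M'_sub v V_off]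
          insert.hyps(1) by simp
      finally show ?thesis .
    next
      case False
      have "card (meeting_signs n A (M \<inter> hplane n H))
          \<le> card (closure_meeting_signs n A (V \<inter> hplane n H) (M' \<inter> hplane n H))"
      proof (cases "dim M = 1")
        case True
        with False obtain H' where "H' \<in> A" by blast
        moreover have "M \<inter> hplane n H \<subseteq> hplane n H'"
          using True dim_M_hplane dim_eq_0[of "M \<inter> hplane n H"] by (auto simp: hplane_def)
        ultimately show ?thesis by (simp add: meeting_signs_eq_empty)
      next
        case False
        have "dim M - 1 \<le> dim (M' \<inter> hplane n H)"
          using dim_Int_hplane_ge[OF subspace_M', of n H] dim_le by linarith
        then show ?thesis
          using dim_M_hplane False dim_M M_sub M'_sub gen_position_in_Int_hplane[OF gen subspace_V] V_off
          by (intro insert.IH) (auto intro: subspace_inter subspace_hplane insert.prems)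
      qed
      moreover have "card (meeting_signs n A M) \<le> card (closure_meeting_signs n A V M')"
        using insert.prems(1-7) gen_position_in_subset[OF gen subset_insertI] by (rule insert.IH)
      ultimately show ?thesis
        using card_meeting_signs_insert_le[OF insert.hyps subspace_imp_convex[OF subspace_M], where n = n]
          card_closure_meeting_signs_insert_ge[OF insert.hyps subspace_V M'_sub V_off]
        by linarith
    qed
  qed
qed

section \<open>Closed regions meeting a generic subspace\<close>

text \<open>For \<open>M\<close> in general position, the hyperplanes through a nonzero point of \<open>M\<close> still have
  independent restrictions to \<open>M\<close>: their intersection and \<open>M\<close> span the whole space.\<close>
lemma gen_position_in_UNIV_inner_eq:
  fixes M :: "'a::euclidean_space set"
  assumes "gen_position_in n A UNIV M" "subspace M" "B \<subseteq> A"
    and "x \<in> M" "x \<noteq> 0" "\<forall>H\<in>B. n H \<bullet> x = 0"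
  shows "\<exists>m\<in>M. \<forall>H\<in>B. n H \<bullet> m = n H \<bullet> y"
proof (cases "B = {}")
  case True
  then show ?thesis using subspace_0[OF assms(2)] by blast
next
  case False
  let ?S = "\<Inter>(hplane n ` B)"
  have S: "subspace ?S" by (rule subspace_Inter) (auto simp: subspace_hplane)
  have "x \<in> ?S \<inter> M" using assms(4,6) by (auto simp: hplane_def)
  then have "\<not> ?S \<inter> M \<subseteq> {0}" using assms(5) by blast
  then have "dim (?S \<inter> M) \<noteq> 0" by simp
  moreover have "dim (?S \<inter> M) = dim M - (DIM('a) - dim ?S)"
    using gen_position_inD[OF assms(1) False assms(3)] by simp
  moreover have "dim {a + b | a b. a \<in> ?S \<and> b \<in> M} + dim (?S \<inter> M) = dim ?S + dim M"
    by (rule dim_sums_Int[OF S assms(2)])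
  moreover have "dim {a + b | a b. a \<in> ?S \<and> b \<in> M} \<le> DIM('a)" "dim ?S \<le> DIM('a)"
    by (rule dim_subset_UNIV)+
  ultimately have "dim {a + b | a b. a \<in> ?S \<and> b \<in> M} = DIM('a)" by linarith
  then have "span {a + b | a b. a \<in> ?S \<and> b \<in> M} = UNIV" by (simp only: dim_eq_full)
  then have "{a + b | a b. a \<in> ?S \<and> b \<in> M} = UNIV"
    using subspace_sums[OF S assms(2)] by (simp only: span_eq_iff[THEN iffD2])
  then obtain a m where "a \<in> ?S" "m \<in> M" "y = a + m" by blast
  then have "\<forall>H\<in>B. n H \<bullet> m = n H \<bullet> y" by (auto simp: hplane_def inner_add_right)
  then show ?thesis using \<open>m \<in> M\<close> by blast
qed

text \<open>A region whose closure meets a generic \<open>M\<close> outside the origin meets \<open>M\<close> itself: move the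
  contact point \<open>x\<close> slightly into the region within \<open>M\<close>.\<close>
lemma closure_meeting_signs_subset_meeting_signs:
  assumes "finite A" "gen_position_in n A UNIV M" "subspace M"
  shows "closure_meeting_signs n A UNIV M \<subseteq> meeting_signs n A M"
proof
  fix P assume "P \<in> closure_meeting_signs n A UNIV M"
  then obtain y x where y: "off_hplanes n A y" "P = sign_vector n A y"
    and x: "x \<in> M" "x \<noteq> 0" "x \<in> closed_cell n A P"
    unfolding closure_meeting_signs_iff by blast
  define B where "B = {H\<in>A. n H \<bullet> x = 0}"
  have "B \<subseteq> A" "\<forall>H\<in>B. n H \<bullet> x = 0" by (auto simp: B_def)
  then obtain m where m: "m \<in> M" "\<forall>H\<in>B. n H \<bullet> m = n H \<bullet> y"
    using gen_position_in_UNIV_inner_eq[OF assms(2,3) _ x(1,2), where y = y] by blast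
  obtain t where "t > 0"
    and t: "\<forall>H\<in>A. n H \<bullet> x \<noteq> 0 \<longrightarrow> sgn (n H \<bullet> (x + t *\<^sub>R m)) = sgn (n H \<bullet> x)"
    using sgn_inner_perturb[OF assms(1)] by blast
  have signs: "n H \<bullet> (x + t *\<^sub>R m) \<noteq> 0 \<and> (n H \<bullet> (x + t *\<^sub>R m) > 0 \<longleftrightarrow> H \<in> P)" if "H \<in> A" for H
  proof (cases "n H \<bullet> x = 0")
    case True
    then have "n H \<bullet> (x + t *\<^sub>R m) = t * (n H \<bullet> y)"
      using m(2) that by (simp add: B_def inner_add_right)
    moreover have "n H \<bullet> y \<noteq> 0" using y(1) that by (simp add: off_hplanes_def)
    ultimately show ?thesis using \<open>t > 0\<close> y(2) that by (auto simp: sign_vector_def zero_less_mult_iff)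
  next
    case False
    then have "sgn (n H \<bullet> (x + t *\<^sub>R m)) = sgn (n H \<bullet> x)" using t that by blast
    moreover have "H \<in> P \<longleftrightarrow> n H \<bullet> x > 0"
      using x(3) False that unfolding closed_cell_def by force
    ultimately show ?thesis using False by (auto simp: sgn_if split: if_splits)
  qed
  have "x + t *\<^sub>R m \<in> M" using x(1) m(1) assms(3) by (simp add: subspace_add subspace_scale)
  moreover have "off_hplanes n A (x + t *\<^sub>R m)" using signs by (simp add: off_hplanes_def)
  moreover have "sign_vector n A (x + t *\<^sub>R m) = P"
    using signs y(2) sign_vector_subset[of n A y] unfolding sign_vector_def by blast
  ultimately show "P \<in> meeting_signs n A M" unfolding meeting_signs_iff by blast
qed

section \<open>Regions as cells\<close>

lemma notin_Union_iff_off_hplanes: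
  assumes "\<forall>H\<in>A. H = hplane n H"
  shows "x \<notin> \<Union>A \<longleftrightarrow> off_hplanes n A x"
proof
  assume "x \<notin> \<Union>A"
  then show "off_hplanes n A x" using assms unfolding off_hplanes_def hplane_def by blast
next
  assume "off_hplanes n A x"
  then show "x \<notin> \<Union>A" using assms unfolding off_hplanes_def hplane_def by blast
qed

lemma connected_component_eq_cell:
  assumes "\<forall>H\<in>A. H = hplane n H" "off_hplanes n A y"
  shows "connected_component_set (UNIV - \<Union>A) y = cell n A (sign_vector n A y)"
proof
  have "cell n A (sign_vector n A y) \<subseteq> UNIV - \<Union>A"
    using notin_Union_iff_off_hplanes[OF assms(1)] by (auto simp: cell_def)
  then show "cell n A (sign_vector n A y) \<subseteq> connected_component_set (UNIV - \<Union>A) y"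
    using assms(2) by (intro connected_component_maximal convex_connected convex_cell) (auto simp: cell_def)
next
  let ?C = "connected_component_set (UNIV - \<Union>A) y"
  have off: "off_hplanes n A z" if "z \<in> ?C" for z
    using that connected_component_subset notin_Union_iff_off_hplanes[OF assms(1)] by blast
  have "y \<in> ?C" using assms(2) notin_Union_iff_off_hplanes[OF assms(1)] by simp
  show "?C \<subseteq> cell n A (sign_vector n A y)"
  proof
    fix z assume z: "z \<in> ?C"
    have "n H \<bullet> z > 0 \<longleftrightarrow> n H \<bullet> y > 0" if H: "H \<in> A" for H
    proof -
      have "False" if pq: "p \<in> ?C" "q \<in> ?C" "n H \<bullet> p \<le> 0" "0 \<le> n H \<bullet> q" for p q
      proof -
        obtain u where "u \<in> ?C" "n H \<bullet> u = 0"
          using connected_ivt_hyperplane[OF connected_connected_component pq] by blast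
        then show False using off H by (auto simp: off_hplanes_def)
      qed
      then show ?thesis using \<open>y \<in> ?C\<close> z off[OF z] off[OF \<open>y \<in> ?C\<close>] H
        unfolding off_hplanes_def by (metis linorder_not_le order.strict_iff_not)
    qed
    then show "z \<in> cell n A (sign_vector n A y)" using off[OF z] by (auto simp: cell_def sign_vector_def)
  qed
qed

lemma regions_eq_cells:
  assumes "\<forall>H\<in>A. H = hplane n H"
  shows "regions A = cell n A ` meeting_signs n A UNIV"
proof -
  have "regions A = (\<lambda>y. connected_component_set (UNIV - \<Union>A) y) ` {y. off_hplanes n A y}"
    using notin_Union_iff_off_hplanes[OF assms] unfolding regions_def components_def by auto
  also have "\<dots> = (\<lambda>y. cell n A (sign_vector n A y)) ` {y. off_hplanes n A y}"
    using connected_component_eq_cell[OF assms] by simp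
  finally show ?thesis unfolding meeting_signs_def by auto
qed

lemma inj_on_cell: "inj_on (cell n A) (meeting_signs n A UNIV)"
proof (rule inj_onI)
  fix P Q assume "P \<in> meeting_signs n A UNIV" "cell n A P = cell n A Q"
  then obtain y where "y \<in> cell n A P" "y \<in> cell n A Q" by (auto simp: meeting_signs_iff cell_def)
  then show "P = Q" by (simp add: cell_def)
qed

lemma closure_cell:
  assumes "P \<in> meeting_signs n A UNIV"
  shows "closure (cell n A P) = closed_cell n A P"
proof
  show "closure (cell n A P) \<subseteq> closed_cell n A P"
    by (intro closure_minimal closed_closed_cell) (auto simp: cell_def mem_closed_cell_sign_vector)
next
  obtain y where y: "y \<in> cell n A P" using assms by (auto simp: meeting_signs_iff cell_def)
  have "P \<subseteq> A" using y by (auto simp: cell_def sign_vector_def)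
  show "closed_cell n A P \<subseteq> closure (cell n A P)"
  proof
    fix x assume x: "x \<in> closed_cell n A P"
    have "x + t *\<^sub>R y \<in> cell n A P" if "t > 0" for t
      using x y \<open>t > 0\<close> \<open>P \<subseteq> A\<close>
      by (auto simp: mem_cell_iff_signs closed_cell_def inner_add_right
          intro!: add_nonneg_pos add_nonpos_neg mult_pos_pos mult_pos_neg)
    then have "\<forall>\<^sub>F t in at_right 0. x + t *\<^sub>R y \<in> closure (cell n A P)"
      using eventually_at_right_less[of 0] closure_subset by (blast intro: eventually_mono)
    moreover have "((\<lambda>t. x + t *\<^sub>R y) \<longlongrightarrow> x) (at_right 0)" by (auto intro!: tendsto_eq_intros)
    ultimately show "x \<in> closure (cell n A P)" by (intro Lim_in_closed_set[OF closed_closure]) auto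
  qed
qed

lemma regions_meeting_eq:
  assumes "\<forall>H\<in>A. H = hplane n H"
  shows "{R \<in> regions A. R \<inter> M \<noteq> {}} = cell n A ` meeting_signs n A M"
  unfolding regions_eq_cells[OF assms] by (auto simp: meeting_signs_def cell_def)

lemma regions_closure_meeting_eq:
  assumes "\<forall>H\<in>A. H = hplane n H" "0 \<in> M"
  shows "{R \<in> regions A. closure R \<inter> M \<noteq> {0}} = cell n A ` closure_meeting_signs n A UNIV M"
proof -
  have "0 \<in> closed_cell n A P" for P by (simp add: closed_cell_def)
  then have "closure (cell n A P) \<inter> M \<noteq> {0} \<longleftrightarrow> (\<exists>x\<in>M. x \<noteq> 0 \<and> x \<in> closed_cell n A P)"
    if "P \<in> meeting_signs n A UNIV" for P
    using closure_cell[OF that] assms(2) by blast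
  then show ?thesis unfolding regions_eq_cells[OF assms(1)] closure_meeting_signs_def by auto
qed

lemma card_cell_image:
  "S \<subseteq> meeting_signs n A UNIV \<Longrightarrow> card (cell n A ` S) = card S"
  using inj_on_cell by (intro card_image) (rule inj_on_subset)

lemma card_regions_meeting:
  assumes "\<forall>H\<in>A. H = hplane n H"
  shows "card {R \<in> regions A. R \<inter> M \<noteq> {}} = card (meeting_signs n A M)"
  unfolding regions_meeting_eq[OF assms] by (intro card_cell_image meeting_signs_mono) simp

lemma card_regions_closure_meeting:
  assumes "\<forall>H\<in>A. H = hplane n H" "0 \<in> M"
  shows "card {R \<in> regions A. closure R \<inter> M \<noteq> {0}} = card (closure_meeting_signs n A UNIV M)"
  unfolding regions_closure_meeting_eq[OF assms] by (intro card_cell_image) (auto simp: closure_meeting_signs_def)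

lemma closure_meeting_signs_eq_meeting_signs:
  fixes M :: "'a::euclidean_space set"
  assumes "finite A" "gen_position_in n A UNIV M" "subspace M" "dim M \<ge> 1"
  shows "closure_meeting_signs n A UNIV M = meeting_signs n A M"
proof
  show "meeting_signs n A M \<subseteq> closure_meeting_signs n A UNIV M"
  proof
    fix P assume "P \<in> meeting_signs n A M"
    then obtain y where y: "y \<in> M" "off_hplanes n A y" "P = sign_vector n A y"
      unfolding meeting_signs_iff by blast
    obtain v where v: "v \<in> M" "v \<noteq> 0" using assms(4) by (rule exists_nonzero_of_dim_ge_1)
    have "\<exists>x\<in>M. x \<noteq> 0 \<and> x \<in> closed_cell n A P"
    proof (cases "y = 0")
      case True
      then have "A = {}" using y(2) by (auto simp: off_hplanes_def)
      then show ?thesis using v by (auto simp: closed_cell_def)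
    next
      case False
      then show ?thesis using y mem_closed_cell_sign_vector by blast
    qed
    then show "P \<in> closure_meeting_signs n A UNIV M"
      using y by (auto simp: closure_meeting_signs_def meeting_signs_iff)
  qed
qed (rule closure_meeting_signs_subset_meeting_signs[OF assms(1-3)])

lemma lin_arrangement_normals:
  assumes "lin_arrangement A"
  obtains n :: "'a set \<Rightarrow> 'a::euclidean_space" where "\<forall>H\<in>A. H = hplane n H"
proof -
  have "\<forall>H\<in>A. \<exists>a. H = {x. a \<bullet> x = 0}"
    using assms by (auto simp: lin_arrangement_def lin_hyperplane_def)
  then obtain n where "\<forall>H\<in>A. H = {x. n H \<bullet> x = 0}" by metis
  then show thesis using that by (simp add: hplane_def)
qed

lemma gen_position_in_UNIV_if_general_position:
  assumes "general_position A d L" "dim L = DIM('a) - d" "\<forall>H\<in>A. H = hplane n H"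
  shows "gen_position_in n A UNIV (L :: 'a::euclidean_space set)"
  unfolding gen_position_in_def
proof (intro allI impI)
  fix B assume B: "B \<noteq> {} \<and> B \<subseteq> A"
  then have "hplane n ` B = B" using assms(3) by force
  moreover have "(\<Inter>H\<in>B. H \<inter> L) = \<Inter>B \<inter> L" using B by blast
  ultimately show "dim (\<Inter>(hplane n ` B) \<inter> L) = dim L - (dim (UNIV :: 'a set) - dim (\<Inter>(hplane n ` B) \<inter> UNIV))"
    using assms(1,2) B unfolding general_position_def arr_rank_def by simp
qed

theorem lemma3p5:
  fixes A :: "'a::euclidean_space set set" and L L' :: "'a set" and d :: nat
  assumes "lin_arrangement A"
    and "d \<le> DIM('a) - 1"
    and "subspace L" and "dim L = DIM('a) - d"
    and "subspace L'" and "dim L' = DIM('a) - d"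
    and "general_position A d L"
  shows "{R \<in> regions A. closure R \<inter> L \<noteq> {0}} = {R \<in> regions A. R \<inter> L \<noteq> {}}
    \<and> card {R \<in> regions A. closure R \<inter> L' \<noteq> {0}} \<ge> card {R \<in> regions A. closure R \<inter> L \<noteq> {0}}
    \<and> card {R \<in> regions A. R \<inter> L' \<noteq> {}} \<le> card {R \<in> regions A. R \<inter> L \<noteq> {}}"
proof -
  obtain n where A: "\<forall>H\<in>A. H = hplane n H" using lin_arrangement_normals[OF assms(1)] .
  have fin: "finite A" using assms(1) by (simp add: lin_arrangement_def)
  have gen: "gen_position_in n A UNIV L"
    using gen_position_in_UNIV_if_general_position[OF assms(7,4) A] .
  have dim: "dim L \<ge> 1" "dim L' = dim L" using assms(2,4,6) DIM_positive[where 'a = 'a] by linarith+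
  have "0 \<in> L" "0 \<in> L'" using assms(3,5) by (simp_all add: subspace_0)
  have signs_eq: "closure_meeting_signs n A UNIV L = meeting_signs n A L"
    using closure_meeting_signs_eq_meeting_signs[OF fin gen assms(3) dim(1)] .
  have "card (meeting_signs n A L) \<le> card (closure_meeting_signs n A UNIV L')"
    using card_meeting_signs_le_closure_meeting_signs[OF fin _ assms(3,5) _ _ _ dim(1) gen] dim(2)
    by simp
  moreover have "card (meeting_signs n A L') \<le> card (meeting_signs n A L)"
    using card_meeting_signs_le_gen_position[OF fin _ assms(3,5) _ _ _ gen] dim(2) by simp
  ultimately show ?thesis
    unfolding regions_closure_meeting_eq[OF A \<open>0 \<in> L\<close>] regions_meeting_eq[OF A] signs_eq
      card_regions_closure_meeting[OF A \<open>0 \<in> L'\<close>] card_regions_meeting[OF A]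
    by (simp add: card_cell_image meeting_signs_mono)
qed

end
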